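(* Let $m\in\mathbb{N}$ and $s_1,\dots,s_m\ge1$. Then for every non-negative measurable function $f:H\times X\to[0,\infty)$ and every $\Delta\in X$, $$\int_{-1/3}^{1/3}f(a_{s_1+\cdots+s_m}u_r;\Delta)\,dr\le2\int f(a_{s_m}u_{r_m}\cdots a_{s_1}u_{r_1};\Delta)\,dm_I^{\otimes m}(r_1,\dots,r_m)$$ and $$\int f(a_{s_m}u_{r_m}\cdots a_{s_1}u_{r_1};\Delta)\,dm_I^{\otimes m}(r_1,\dots,r_m)\le\int_{-2}^{2}f(a_{s_1+\cdots+s_m}u_r;\Delta)\,dr.$$
   Context: $Q_0(v)=v_2^2-2v_1v_3$, $H=\{g\in\mathrm{SL}_3(\mathbb{R}):Q_0(gv)=Q_0(v)\ \forall v\}$, $X$ the space of unimodular lattices in $\mathbb{R}^3$. $a_t=\mathrm{diag}(e^t,1,e^{-t})$, $u_r=\begin{pmatrix}1&r&r^2/2\\0&1&r\\0&0&1\end{pmatrix}$. $m_I$ is the uniform Lebesgue probability measure on $I=[-1,1]$. *)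

theory Defs
  imports "HOL-Analysis.Analysis" "HOL-Probability.Probability"
begin

definition Q0 :: "real^3 \<Rightarrow> real" where
  "Q0 v = (v$2)^2 - 2 * (v$1) * (v$3)"

definition SL3 :: "(real^3^3) set" where
  "SL3 = {g. det g = 1}"

definition Hgrp :: "(real^3^3) set" where
  "Hgrp = {g \<in> SL3. \<forall>v. Q0 (g *v v) = Q0 v}"

definition a_mat :: "real \<Rightarrow> real^3^3" where
  "a_mat t = (\<chi> i j. if i = j then (if i = 1 then exp t else if i = 2 then 1 else exp (- t)) else 0)"

definition u_mat :: "real \<Rightarrow> real^3^3" where
  "u_mat r = (\<chi> i j. if i = j then 1
                     else if i = 1 \<and> j = 2 then r
                     else if i = 1 \<and> j = 3 then r^2 / 2
                     else if i = 2 \<and> j = 3 then r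
                     else 0)"

definition lattice_of :: "real^3^3 \<Rightarrow> (real^3) set" where
  "lattice_of g = range (\<lambda>z::int^3. g *v (\<chi> i. real_of_int (z$i)))"

definition Xlat :: "(real^3) set set" where
  "Xlat = lattice_of ` SL3"

text \<open>Borel structure on X = SL3(R)/SL3(Z): the quotient sigma-algebra, i.e. a set of
  lattices is measurable iff its preimage in SL3(R) is Borel.\<close>
definition Xmeas :: "(real^3) set measure" where
  "Xmeas = measure_of Xlat
     {A. A \<subseteq> Xlat \<and> {g \<in> SL3. lattice_of g \<in> A} \<in> sets (borel :: (real^3^3) measure)}
     (\<lambda>_. 0)"

definition Hmeas :: "(real^3^3) measure" where
  "Hmeas = restrict_space borel Hgrp"

text \<open>a_{s_m} u_{r_m} ... a_{s_1} u_{r_1}, with s_i = s (i-1), r_i = r (i-1).\<close>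
fun au_prod :: "(nat \<Rightarrow> real) \<Rightarrow> (nat \<Rightarrow> real) \<Rightarrow> nat \<Rightarrow> real^3^3" where
  "au_prod s r 0 = mat 1"
| "au_prod s r (Suc k) = (a_mat (s k) ** u_mat (r k)) ** au_prod s r k"

definition m_I :: "real measure" where
  "m_I = uniform_measure lborel {-1..1}"

end

(* Since u_r a_t = a_t u_(e^-t r), the product a_(s_m) u_(r_m) ... a_(s_1) u_(r_1) collapses to
   a_T u_R with T = s_1 + ... + s_m and R = r_1 + Y, where
   Y = sum_(i>=2) exp (-(s_1 + ... + s_(i-1))) r_i does not involve r_1.  As every s_i >= 1,
   |Y| <= sum_(i>=1) (2/5)^i = 2/3.  Integrating out r_1 first therefore averages the function
   r |-> f (a_T u_r; Delta) over the window [Y - 1, Y + 1], which always contains [-1/3, 1/3]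
   and is always contained in [-2, 2]. *)
theory Submission
  imports Defs
begin

lemma a_mat_add: "a_mat s ** a_mat t = a_mat (s + t)"
  by (simp add: a_mat_def matrix_matrix_mult_def vec_eq_iff forall_3 sum_3 mult_exp_exp)

lemma u_mat_add: "u_mat r ** u_mat r' = u_mat (r + r')"
  by (simp add: u_mat_def matrix_matrix_mult_def vec_eq_iff forall_3 sum_3 power2_eq_square
      field_simps)

lemma u_mat_a_mat_commute: "u_mat r ** a_mat t = a_mat t ** u_mat (exp (- t) * r)"
  by (simp add: u_mat_def a_mat_def matrix_matrix_mult_def vec_eq_iff forall_3 sum_3
      power2_eq_square field_simps exp_minus)

lemma a_mat_0 [simp]: "a_mat 0 = mat 1"
  by (simp add: a_mat_def mat_def vec_eq_iff forall_3)

lemma u_mat_0 [simp]: "u_mat 0 = mat 1"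
  by (simp add: u_mat_def mat_def vec_eq_iff forall_3)

lemma a_mat_in_Hgrp: "a_mat t \<in> Hgrp"
  by (simp add: Hgrp_def SL3_def Q0_def a_mat_def det_3 matrix_vector_mult_def sum_3 exp_minus
      field_simps)

lemma u_mat_in_Hgrp: "u_mat r \<in> Hgrp"
  by (simp add: Hgrp_def SL3_def Q0_def u_mat_def det_3 matrix_vector_mult_def sum_3
      power2_eq_square field_simps)

lemma Hgrp_mult_closed: "g \<in> Hgrp \<Longrightarrow> h \<in> Hgrp \<Longrightarrow> g ** h \<in> Hgrp"
  by (simp add: Hgrp_def SL3_def det_mul matrix_vector_mul_assoc[symmetric])

lemma au_prod_normal_form:
  "au_prod s r k = a_mat (\<Sum>j<k. s j) ** u_mat (\<Sum>i<k. exp (- (\<Sum>j<i. s j)) * r i)"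
proof (induction k)
  case 0
  show ?case by simp
next
  case (Suc k)
  let ?T = "\<Sum>j<k. s j" and ?R = "\<Sum>i<k. exp (- (\<Sum>j<i. s j)) * r i"
  have "au_prod s r (Suc k) = a_mat (s k) ** (u_mat (r k) ** a_mat ?T) ** u_mat ?R"
    using Suc by (simp add: matrix_mul_assoc)
  also have "\<dots> = (a_mat (s k) ** a_mat ?T) ** (u_mat (exp (- ?T) * r k) ** u_mat ?R)"
    by (simp add: u_mat_a_mat_commute matrix_mul_assoc)
  also have "\<dots> = a_mat (?T + s k) ** u_mat (?R + exp (- ?T) * r k)"
    by (simp add: a_mat_add u_mat_add add.commute)
  finally show ?case by simp
qed

lemma continuous_on_u_mat: "continuous_on UNIV u_mat"
  unfolding u_mat_def
  apply (intro continuous_on_vec_lambda)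
  subgoal for i j using exhaust_3[of i] exhaust_3[of j] by (auto intro!: continuous_intros)
  done

lemma space_Xmeas: "space Xmeas = Xlat"
  unfolding Xmeas_def by (rule space_measure_of) auto

lemma measurable_a_mat_u_mat_orbit:
  assumes "\<Delta> \<in> Xlat"
  shows "(\<lambda>r. (a_mat t ** u_mat r, \<Delta>)) \<in> borel \<rightarrow>\<^sub>M Hmeas \<Otimes>\<^sub>M Xmeas"
proof (rule measurable_Pair)
  have "continuous_on UNIV (\<lambda>r. a_mat t ** u_mat r)"
    unfolding matrix_matrix_mult_def by (intro continuous_intros continuous_on_u_mat)
  then show "(\<lambda>r. a_mat t ** u_mat r) \<in> borel \<rightarrow>\<^sub>M Hmeas"
    unfolding Hmeas_def
    by (intro measurable_restrict_space2 borel_measurable_continuous_onI)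
      (auto intro: Hgrp_mult_closed a_mat_in_Hgrp u_mat_in_Hgrp)
  show "(\<lambda>r. \<Delta>) \<in> borel \<rightarrow>\<^sub>M Xmeas"
    using assms by (simp add: space_Xmeas)
qed

lemma exp_neg_one_le: "exp (-1 :: real) \<le> 2/5"
proof -
  have "1 + 1 + 1^2/2 \<le> exp (1 :: real)"
    by (rule exp_lower_Taylor_quadratic) simp
  then show ?thesis by (simp add: exp_minus field_simps)
qed

lemma sum_power_atLeastLessThan_1_le:
  fixes q :: real
  assumes "0 \<le> q" "q < 1"
  shows "(\<Sum>i\<in>{1..<m}. q ^ i) \<le> q / (1 - q)"
proof (cases "m \<le> 1")
  case True
  then show ?thesis using assms by simp
next
  case False
  then have "{1..<m} = {1..m - 1}" by auto
  then have "(\<Sum>i\<in>{1..<m}. q ^ i) = (q - q ^ m) / (1 - q)"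
    using False assms by (simp add: sum_gp)
  also have "\<dots> \<le> q / (1 - q)"
    using assms by (intro divide_right_mono) auto
  finally show ?thesis .
qed

lemma exp_neg_partial_sum_le:
  fixes s :: "nat \<Rightarrow> real"
  assumes "\<forall>j<m. s j \<ge> 1" "i \<le> m"
  shows "exp (- (\<Sum>j<i. s j)) \<le> exp (-1) ^ i"
proof -
  have "real i \<le> (\<Sum>j<i. s j)"
    using sum_mono[of "{..<i}" "\<lambda>_. 1 :: real" s] assms by auto
  then show ?thesis by (simp flip: exp_of_nat_mult)
qed

lemma weighted_tail_bound:
  fixes s x :: "nat \<Rightarrow> real"
  assumes "\<forall>j<m. s j \<ge> 1" "\<forall>i\<in>{1..<m}. \<bar>x i\<bar> \<le> 1"
  shows "\<bar>\<Sum>i\<in>{1..<m}. exp (- (\<Sum>j<i. s j)) * x i\<bar> \<le> 2/3"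
proof -
  have "\<bar>\<Sum>i\<in>{1..<m}. exp (- (\<Sum>j<i. s j)) * x i\<bar> \<le> (\<Sum>i\<in>{1..<m}. exp (-1) ^ i)"
  proof (rule order_trans[OF sum_abs sum_mono])
    fix i assume i: "i \<in> {1..<m}"
    have "\<bar>exp (- (\<Sum>j<i. s j)) * x i\<bar> \<le> exp (- (\<Sum>j<i. s j))"
      using assms(2) i by (simp add: abs_mult mult_left_le)
    also have "\<dots> \<le> exp (-1) ^ i"
      using exp_neg_partial_sum_le[OF assms(1)] i by simp
    finally show "\<bar>exp (- (\<Sum>j<i. s j)) * x i\<bar> \<le> exp (-1) ^ i" .
  qed
  also have "\<dots> \<le> exp (-1) / (1 - exp (-1))"
    by (rule sum_power_atLeastLessThan_1_le) auto
  also have "\<dots> \<le> 2/3"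
    using exp_neg_one_le by (simp add: field_simps)
  finally show ?thesis .
qed

lemma prob_space_m_I: "prob_space m_I"
  unfolding m_I_def by (rule prob_space_uniform_measure) auto

lemma sets_m_I [measurable_cong]: "sets m_I = sets borel"
  by (simp add: m_I_def)

lemma AE_PiM_m_I_abs_le_1:
  assumes "finite I"
  shows "AE x in PiM I (\<lambda>_. m_I). \<forall>i\<in>I. \<bar>x i\<bar> \<le> 1"
proof (rule AE_finite_allI[OF assms])
  have "AE y in m_I. \<bar>y\<bar> \<le> 1"
    unfolding m_I_def by (rule AE_uniform_measureI) auto
  then show "AE x in PiM I (\<lambda>_. m_I). \<bar>x i\<bar> \<le> 1" if "i \<in> I" for i
    using that prob_space_m_I by (intro AE_PiM_component)
qed

lemma nn_integral_m_I_translate: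
  assumes [measurable]: "g \<in> borel_measurable borel"
  shows "(\<integral>\<^sup>+ y. g (y + c) \<partial>m_I) = (\<integral>\<^sup>+ x\<in>{c - 1..c + 1}. g x \<partial>lborel) / 2"
proof -
  have "(\<integral>\<^sup>+ y. g (y + c) \<partial>m_I) = (\<integral>\<^sup>+ y. g (y + c) * indicator {-1..1} y \<partial>lborel) / 2"
    unfolding m_I_def by (subst nn_integral_uniform_measure) auto
  also have "(\<integral>\<^sup>+ y. g (y + c) * indicator {-1..1} y \<partial>lborel) = (\<integral>\<^sup>+ x\<in>{c - 1..c + 1}. g x \<partial>lborel)"
    by (subst nn_integral_real_affine[where c = 1 and t = c])
      (auto intro!: nn_integral_cong simp: add.commute split: split_indicator)
  finally show ?thesis .
qed

lemma nn_integral_PiM_split_first: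
  fixes g :: "real \<Rightarrow> ennreal" and w :: "nat \<Rightarrow> real"
  assumes "sigma_finite_measure M" "sets M = sets borel"
    and [measurable]: "g \<in> borel_measurable borel"
    and "w 0 = 1" "m \<ge> 1"
  shows "(\<integral>\<^sup>+ r. g (\<Sum>i<m. w i * r i) \<partial>PiM {..<m} (\<lambda>_. M))
       = (\<integral>\<^sup>+ x. (\<integral>\<^sup>+ y. g (y + (\<Sum>i\<in>{1..<m}. w i * x i)) \<partial>M) \<partial>PiM {1..<m} (\<lambda>_. M))"
proof -
  interpret product_sigma_finite "\<lambda>_. M"
    using assms(1) by (simp add: product_sigma_finite_def)
  have split: "{..<m} = insert 0 {1..<m}"
    using assms(5) by auto
  have "(\<lambda>r. \<Sum>i<m. w i * r i) \<in> borel_measurable (PiM {..<m} (\<lambda>_. M))"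
    using assms(2) by (simp cong: measurable_cong_sets)
  then have "(\<integral>\<^sup>+ r. g (\<Sum>i<m. w i * r i) \<partial>PiM (insert 0 {1..<m}) (\<lambda>_. M))
      = (\<integral>\<^sup>+ x. (\<integral>\<^sup>+ y. g (\<Sum>i\<in>insert 0 {1..<m}. w i * (x(0 := y)) i) \<partial>M) \<partial>PiM {1..<m} (\<lambda>_. M))"
    unfolding split by (intro product_nn_integral_insert) auto
  also have "\<dots> = (\<integral>\<^sup>+ x. (\<integral>\<^sup>+ y. g (y + (\<Sum>i\<in>{1..<m}. w i * x i)) \<partial>M) \<partial>PiM {1..<m} (\<lambda>_. M))"
    using assms(4) by (auto intro!: nn_integral_cong sum.cong arg_cong[where f = g])
  finally show ?thesis by (simp only: split)
qed

lemma nn_integral_m_I_translate_bounds: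
  fixes g :: "real \<Rightarrow> ennreal" and Y :: "'a \<Rightarrow> real"
  assumes "prob_space M" "g \<in> borel_measurable borel" "AE x in M. \<bar>Y x\<bar> \<le> \<delta>"
  shows "(\<integral>\<^sup>+ r\<in>{\<delta> - 1..1 - \<delta>}. g r \<partial>lborel) \<le> 2 * (\<integral>\<^sup>+ x. (\<integral>\<^sup>+ y. g (y + Y x) \<partial>m_I) \<partial>M)"
    and "2 * (\<integral>\<^sup>+ x. (\<integral>\<^sup>+ y. g (y + Y x) \<partial>m_I) \<partial>M) \<le> (\<integral>\<^sup>+ r\<in>{- 1 - \<delta>..1 + \<delta>}. g r \<partial>lborel)"
proof -
  let ?W = "\<lambda>c. \<integral>\<^sup>+ x\<in>{c - 1..c + 1}. g x \<partial>lborel"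
  let ?L = "\<integral>\<^sup>+ r\<in>{\<delta> - 1..1 - \<delta>}. g r \<partial>lborel" and ?U = "\<integral>\<^sup>+ r\<in>{- 1 - \<delta>..1 + \<delta>}. g r \<partial>lborel"
  have two_half: "2 * (A / 2) = A" for A :: ennreal
    by (simp add: ennreal_times_divide mult.commute mult_divide_eq_ennreal)
  have const: "(\<integral>\<^sup>+ x. A \<partial>M) = A" for A
    using prob_space.emeasure_space_1[OF assms(1)] by simp
  have avg: "(\<integral>\<^sup>+ x. (\<integral>\<^sup>+ y. g (y + Y x) \<partial>m_I) \<partial>M) = (\<integral>\<^sup>+ x. ?W (Y x) / 2 \<partial>M)"
    using nn_integral_m_I_translate[OF assms(2)] by simp
  have window_lower: "?L \<le> ?W c" if "\<bar>c\<bar> \<le> \<delta>" for c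
    by (rule nn_set_integral_set_mono) (use that in \<open>simp add: abs_le_iff\<close>)
  have window_upper: "?W c \<le> ?U" if "\<bar>c\<bar> \<le> \<delta>" for c
    by (rule nn_set_integral_set_mono) (use that in \<open>simp add: abs_le_iff\<close>)
  have "AE x in M. ?L / 2 \<le> ?W (Y x) / 2"
    using assms(3) by eventually_elim (rule divide_right_mono_ennreal[OF window_lower])
  from nn_integral_mono_AE[OF this] have "?L / 2 \<le> (\<integral>\<^sup>+ x. ?W (Y x) / 2 \<partial>M)"
    by (simp only: const)
  from mult_left_mono[OF this, of 2] show "?L \<le> 2 * (\<integral>\<^sup>+ x. (\<integral>\<^sup>+ y. g (y + Y x) \<partial>m_I) \<partial>M)"
    by (simp add: avg two_half)
  have "AE x in M. ?W (Y x) / 2 \<le> ?U / 2"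
    using assms(3) by eventually_elim (rule divide_right_mono_ennreal[OF window_upper])
  from nn_integral_mono_AE[OF this] have "(\<integral>\<^sup>+ x. ?W (Y x) / 2 \<partial>M) \<le> ?U / 2"
    by (simp only: const)
  from mult_left_mono[OF this, of 2] show "2 * (\<integral>\<^sup>+ x. (\<integral>\<^sup>+ y. g (y + Y x) \<partial>m_I) \<partial>M) \<le> ?U"
    by (simp add: avg two_half)
qed

theorem lemma6p1:
  fixes m :: nat and s :: "nat \<Rightarrow> real"
    and f :: "(real^3^3) \<times> ((real^3) set) \<Rightarrow> real" and \<Delta> :: "(real^3) set"
  assumes "m \<ge> 1"
    and "\<forall>i<m. s i \<ge> 1"
    and "f \<in> borel_measurable (Hmeas \<Otimes>\<^sub>M Xmeas)"
    and "\<forall>h\<in>Hgrp. \<forall>L\<in>Xlat. f (h, L) \<ge> 0"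
    and "\<Delta> \<in> Xlat"
  shows "(\<integral>\<^sup>+ r\<in>{-1/3..1/3}. ennreal (f (a_mat (\<Sum>i<m. s i) ** u_mat r, \<Delta>)) \<partial>lborel)
           \<le> 2 * (\<integral>\<^sup>+ r. ennreal (f (au_prod s r m, \<Delta>)) \<partial>(PiM {..<m} (\<lambda>_. m_I)))
       \<and> (\<integral>\<^sup>+ r. ennreal (f (au_prod s r m, \<Delta>)) \<partial>(PiM {..<m} (\<lambda>_. m_I)))
           \<le> (\<integral>\<^sup>+ r\<in>{-2..2}. ennreal (f (a_mat (\<Sum>i<m. s i) ** u_mat r, \<Delta>)) \<partial>lborel)"
proof -
  define g where "g r = ennreal (f (a_mat (\<Sum>i<m. s i) ** u_mat r, \<Delta>))" for r
  define Y where "Y x = (\<Sum>i\<in>{1..<m}. exp (- (\<Sum>j<i. s j)) * x i)" for x :: "nat \<Rightarrow> real"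
  define P where "P = (\<integral>\<^sup>+ r. ennreal (f (au_prod s r m, \<Delta>)) \<partial>(PiM {..<m} (\<lambda>_. m_I)))"
  have g_meas: "g \<in> borel_measurable borel"
    using measurable_compose[OF measurable_a_mat_u_mat_orbit[OF assms(5)] assms(3)]
    unfolding g_def by simp
  have P_eq: "P = (\<integral>\<^sup>+ x. (\<integral>\<^sup>+ y. g (y + Y x) \<partial>m_I) \<partial>PiM {1..<m} (\<lambda>_. m_I))"
    unfolding P_def Y_def au_prod_normal_form g_def[symmetric]
    using prob_space_m_I g_meas assms(1)
    by (intro nn_integral_PiM_split_first) (auto simp: prob_space_imp_sigma_finite sets_m_I)
  have prob: "prob_space (PiM {1..<m} (\<lambda>_. m_I))"
    using prob_space_m_I by (rule prob_space_PiM)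
  have AE_Y: "AE x in PiM {1..<m} (\<lambda>_. m_I). \<bar>Y x\<bar> \<le> 2/3"
    using AE_PiM_m_I_abs_le_1[OF finite_atLeastLessThan]
    unfolding Y_def by eventually_elim (rule weighted_tail_bound[OF assms(2)])
  have "(\<integral>\<^sup>+ r\<in>{-1/3..1/3}. g r \<partial>lborel) \<le> 2 * P"
    using nn_integral_m_I_translate_bounds(1)[OF prob g_meas AE_Y] by (simp add: P_eq)
  moreover have "P \<le> (\<integral>\<^sup>+ r\<in>{-2..2}. g r \<partial>lborel)"
  proof -
    have "P \<le> 2 * P"
      using add_increasing2[of P P P] by (simp add: mult_2)
    also have "\<dots> \<le> (\<integral>\<^sup>+ r\<in>{-5/3..5/3}. g r \<partial>lborel)"
      using nn_integral_m_I_translate_bounds(2)[OF prob g_meas AE_Y] by (simp add: P_eq)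
    also have "\<dots> \<le> (\<integral>\<^sup>+ r\<in>{-2..2}. g r \<partial>lborel)"
      by (rule nn_set_integral_set_mono) auto
    finally show ?thesis .
  qed
  ultimately show ?thesis
    by (simp only: P_def g_def)
qed

end
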